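(* Assume $d'=1$, $t\ge2$, and $a<d$. Fix $n\ne j$ in $[t]$ and let $F_{n,j}$ be the $\binom{d+1}2\times d$ matrix with rows indexed by $\{k_1,k_2\}\in\operatorname{Mult}_2([d])$, columns by $k_3\in[d]$, and entries $(F_{n,j})_{\{k_1,k_2\},k_3}=y_{n,j}(\{k_1,k_2\},k_3)$. Then $\operatorname{rank}F_{n,j}(\mu(W))\le a$ for all $W$. Consequently all $\binom{\binom{d+1}{2}}{a+1}\binom{d}{a+1}$ minors of size $(a+1)\times(a+1)$ of $F_{n,j}$, homogeneous polynomials of degree $a+1$, vanish on the attention variety.
   Context: Setup: $Q,K\in\mathbb R^{a\times d}$, $V\in\mathbb R^{1\times d}$, $A=K^\top Q$ (so $\operatorname{rank}A\le a$), $\varphi_W(X)=VX(X^\top AX)$ for $X=(x_{kn})\in\mathbb R^{d\times t}$. For $\mathcal A\in\operatorname{Mult}_2([d])$ (size-2 multisets on $[d]$), $b\in[d]$, $n\ne j$: $c_{n,j}(\mathcal A,b)$ is the coefficient of $(\prod_{u\in\mathcal A}x_{un})x_{bj}$ in $\varphi_W(X)[1,j]$ and $y_{n,j}(\mathcal A,b)=c_{n,j}(\mathcal A,b)/|\operatorname{Perm}(\mathcal A)|$, $\operatorname{Perm}$ being the set of distinct orderings. $\mu$ maps $W=(Q,K,V)$ to all scaled coefficients (ambient coordinates with the same names); the attention variety is the Zariski closure of $\operatorname{im}\mu$. *)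

theory Defs
  imports "HOL-Library.Poly_Mapping" "HOL-Combinatorics.Multiset_Permutations"
    "Jordan_Normal_Form.DL_Rank" "Jordan_Normal_Form.DL_Submatrix"
begin

(* Indices are 0-based: [d] = {0..<d}, [t] = {0..<t}.
   Parameters: Q K :: nat => nat => real (a x d, entries Q i k, i<a, k<d),
   V :: nat => real (1 x d, entries V k, k<d). *)

type_synonym 'v mpoly = "('v \<Rightarrow>\<^sub>0 nat) \<Rightarrow>\<^sub>0 real"

definition mpoly_eval :: "'v mpoly \<Rightarrow> ('v \<Rightarrow> real) \<Rightarrow> real" where
  "mpoly_eval f x = (\<Sum>mo\<in>Poly_Mapping.keys f. Poly_Mapping.lookup f mo *
     (\<Prod>v\<in>Poly_Mapping.keys mo. x v ^ Poly_Mapping.lookup mo v))"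

definition mconst :: "real \<Rightarrow> 'v mpoly" where
  "mconst c = Poly_Mapping.single 0 c"

definition mvar :: "'v \<Rightarrow> 'v mpoly" where
  "mvar v = Poly_Mapping.single (Poly_Mapping.single v 1) 1"

definition attA :: "nat \<Rightarrow> (nat \<Rightarrow> nat \<Rightarrow> real) \<Rightarrow> (nat \<Rightarrow> nat \<Rightarrow> real) \<Rightarrow> nat \<Rightarrow> nat \<Rightarrow> real" where
  "attA a Q K p q = (\<Sum>i<a. K i p * Q i q)"

(* phi_W(X)[1,j] = sum_m (V X)[1,m] * (X^T A X)[m,j], as a polynomial in the
   entries x_(k,m) of X (variable (k,m) stands for x_{km}, k<d, m<t) *)
definition phi_entry :: "nat \<Rightarrow> nat \<Rightarrow> nat \<Rightarrow> (nat \<Rightarrow> nat \<Rightarrow> real) \<Rightarrow> (nat \<Rightarrow> nat \<Rightarrow> real)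
      \<Rightarrow> (nat \<Rightarrow> real) \<Rightarrow> nat \<Rightarrow> (nat \<times> nat) mpoly" where
  "phi_entry a d t Q K V j =
     (\<Sum>m<t. (\<Sum>k<d. mconst (V k) * mvar (k, m)) *
             (\<Sum>p<d. \<Sum>q<d. mvar (p, m) * mconst (attA a Q K p q) * mvar (q, j)))"

definition coeff_monomial :: "nat multiset \<Rightarrow> nat \<Rightarrow> nat \<Rightarrow> nat \<Rightarrow> (nat \<times> nat) \<Rightarrow>\<^sub>0 nat" where
  "coeff_monomial AA b n j = (\<Sum>u\<in>#AA. Poly_Mapping.single (u, n) 1) + Poly_Mapping.single (b, j) 1"

definition Mult2 :: "nat \<Rightarrow> nat multiset set" where
  "Mult2 d = {M. size M = 2 \<and> set_mset M \<subseteq> {..<d}}"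

definition c_coef :: "nat \<Rightarrow> nat \<Rightarrow> nat \<Rightarrow> (nat \<Rightarrow> nat \<Rightarrow> real) \<Rightarrow> (nat \<Rightarrow> nat \<Rightarrow> real)
      \<Rightarrow> (nat \<Rightarrow> real) \<Rightarrow> nat \<Rightarrow> nat \<Rightarrow> nat multiset \<Rightarrow> nat \<Rightarrow> real" where
  "c_coef a d t Q K V n j AA b = Poly_Mapping.lookup (phi_entry a d t Q K V j) (coeff_monomial AA b n j)"

definition y_coef :: "nat \<Rightarrow> nat \<Rightarrow> nat \<Rightarrow> (nat \<Rightarrow> nat \<Rightarrow> real) \<Rightarrow> (nat \<Rightarrow> nat \<Rightarrow> real)
      \<Rightarrow> (nat \<Rightarrow> real) \<Rightarrow> nat \<Rightarrow> nat \<Rightarrow> nat multiset \<Rightarrow> nat \<Rightarrow> real" where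
  "y_coef a d t Q K V n j AA b =
     c_coef a d t Q K V n j AA b / real (card (permutations_of_multiset AA))"

(* ambient coordinates: (n, j, AA, b) with n \<noteq> j in [t], AA in Mult_2([d]), b in [d] *)
type_synonym coord = "nat \<times> nat \<times> nat multiset \<times> nat"

definition coords :: "nat \<Rightarrow> nat \<Rightarrow> coord set" where
  "coords d t = {(n, j, AA, b). n < t \<and> j < t \<and> n \<noteq> j \<and> AA \<in> Mult2 d \<and> b < d}"

(* the parametrization mu; points of the ambient space are functions on coord,
   zero outside the index set coords d t *)
definition mu :: "nat \<Rightarrow> nat \<Rightarrow> nat \<Rightarrow> (nat \<Rightarrow> nat \<Rightarrow> real) \<times> (nat \<Rightarrow> nat \<Rightarrow> real) \<times> (nat \<Rightarrow> real)
      \<Rightarrow> coord \<Rightarrow> real" where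
  "mu a d t W = (\<lambda>(n, j, AA, b).
     if (n, j, AA, b) \<in> coords d t
     then (case W of (Q, K, V) \<Rightarrow> y_coef a d t Q K V n j AA b) else 0)"

definition zariski_closure :: "('v \<Rightarrow> real) set \<Rightarrow> ('v \<Rightarrow> real) set" where
  "zariski_closure S = {p. \<forall>f :: 'v mpoly. (\<forall>x\<in>S. mpoly_eval f x = 0) \<longrightarrow> mpoly_eval f p = 0}"

definition attention_variety :: "nat \<Rightarrow> nat \<Rightarrow> nat \<Rightarrow> (coord \<Rightarrow> real) set" where
  "attention_variety a d t = zariski_closure (range (mu a d t))"

definition mult2_list :: "nat \<Rightarrow> nat multiset list" where
  "mult2_list d = concat (map (\<lambda>k1. map (\<lambda>k2. {#k1, k2#}) [k1..<d]) [0..<d])"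

definition Fmat :: "nat \<Rightarrow> nat \<Rightarrow> nat \<Rightarrow> (coord \<Rightarrow> real) \<Rightarrow> real mat" where
  "Fmat d n j p = mat (length (mult2_list d)) d (\<lambda>(r, c). p (n, j, mult2_list d ! r, c))"

end

theory Submission
  imports Defs "Jordan_Normal_Form.DL_Rank_Submatrix"
begin

(* Only the summand m = n of phi_W(X)[1,j] = sum_m (V X)[1,m] (X^T A X)[m,j] contains the
   monomial x_{k1 n} x_{k2 n} x_{b j}, and its coefficient there, divided by the number of
   orderings of {k1,k2}, is y = (V_{k1} A_{k2 b} + V_{k2} A_{k1 b}) / 2
   = sum_{i<a} (V_{k1} K_{i k2} + V_{k2} K_{i k1}) / 2 * Q_{i b}.
   Hence F_{n,j}(mu(W)) factors through R^a and has rank at most a.  Its (a+1)-minors are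
   polynomials in the coordinates that vanish on the image of mu, so they vanish on the
   Zariski closure. *)

section \<open>Polynomial functions\<close>

definition monomial_value :: "('v \<Rightarrow>\<^sub>0 nat) \<Rightarrow> ('v \<Rightarrow> real) \<Rightarrow> real" where
  "monomial_value mo x = (\<Prod>v\<in>Poly_Mapping.keys mo. x v ^ Poly_Mapping.lookup mo v)"

lemma monomial_value_superset:
  assumes "finite S" "Poly_Mapping.keys mo \<subseteq> S"
  shows "monomial_value mo x = (\<Prod>v\<in>S. x v ^ Poly_Mapping.lookup mo v)"
  unfolding monomial_value_def
  by (rule prod.mono_neutral_left[OF assms]) (auto simp: in_keys_iff)

lemma monomial_value_add: "monomial_value (m1 + m2) x = monomial_value m1 x * monomial_value m2 x"
proof -
  let ?S = "Poly_Mapping.keys m1 \<union> Poly_Mapping.keys m2"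
  have "monomial_value (m1 + m2) x = (\<Prod>v\<in>?S. x v ^ Poly_Mapping.lookup (m1 + m2) v)"
    by (rule monomial_value_superset) (use keys_add[of m1 m2] in auto)
  also have "\<dots> = (\<Prod>v\<in>?S. x v ^ Poly_Mapping.lookup m1 v) * (\<Prod>v\<in>?S. x v ^ Poly_Mapping.lookup m2 v)"
    by (simp add: lookup_add power_add prod.distrib)
  also have "\<dots> = monomial_value m1 x * monomial_value m2 x"
    by (subst (1 2) monomial_value_superset[symmetric]) auto
  finally show ?thesis .
qed

lemma mpoly_eval_superset:
  assumes "finite S" "Poly_Mapping.keys f \<subseteq> S"
  shows "mpoly_eval f x = (\<Sum>mo\<in>S. Poly_Mapping.lookup f mo * monomial_value mo x)"
  unfolding mpoly_eval_def monomial_value_def[symmetric]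
  by (rule sum.mono_neutral_left[OF assms]) (auto simp: in_keys_iff)

lemma mpoly_eval_add: "mpoly_eval (f + g) x = mpoly_eval f x + mpoly_eval g x"
proof -
  let ?S = "Poly_Mapping.keys f \<union> Poly_Mapping.keys g"
  have "mpoly_eval (f + g) x = (\<Sum>mo\<in>?S. Poly_Mapping.lookup (f + g) mo * monomial_value mo x)"
    by (rule mpoly_eval_superset) (use keys_add[of f g] in auto)
  also have "\<dots> = (\<Sum>mo\<in>?S. Poly_Mapping.lookup f mo * monomial_value mo x)
                 + (\<Sum>mo\<in>?S. Poly_Mapping.lookup g mo * monomial_value mo x)"
    by (simp add: lookup_add distrib_right sum.distrib)
  also have "\<dots> = mpoly_eval f x + mpoly_eval g x"
    by (subst (1 2) mpoly_eval_superset) auto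
  finally show ?thesis .
qed

lemma mpoly_eval_single: "mpoly_eval (Poly_Mapping.single mo c) x = c * monomial_value mo x"
  by (subst mpoly_eval_superset[of "{mo}"]) auto

lemma mpoly_eval_zero: "mpoly_eval 0 x = 0"
  by (simp add: mpoly_eval_def)

lemma mpoly_eval_sum: "mpoly_eval (\<Sum>i\<in>A. f i) x = (\<Sum>i\<in>A. mpoly_eval (f i) x)"
  by (induction A rule: infinite_finite_induct) (auto simp: mpoly_eval_add mpoly_eval_zero)

lemma poly_mapping_sum_single:
  "f = (\<Sum>k\<in>Poly_Mapping.keys f. Poly_Mapping.single k (Poly_Mapping.lookup f k))"
  by (rule poly_mapping_eqI) (auto simp: lookup_sum lookup_single when_def in_keys_iff)

lemma mpoly_eval_mult: "mpoly_eval (f * g) x = mpoly_eval f x * mpoly_eval g x"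
proof -
  let ?F = "Poly_Mapping.keys f" and ?G = "Poly_Mapping.keys g"
  have "f * g = (\<Sum>k\<in>?F. Poly_Mapping.single k (Poly_Mapping.lookup f k)) *
                (\<Sum>l\<in>?G. Poly_Mapping.single l (Poly_Mapping.lookup g l))"
    by (subst (1) poly_mapping_sum_single, subst (1) poly_mapping_sum_single[of g]) (rule refl)
  also have "\<dots> = (\<Sum>k\<in>?F. \<Sum>l\<in>?G.
      Poly_Mapping.single (k + l) (Poly_Mapping.lookup f k * Poly_Mapping.lookup g l))"
    by (simp add: sum_product mult_single)
  finally have "mpoly_eval (f * g) x = (\<Sum>k\<in>?F. \<Sum>l\<in>?G.
      (Poly_Mapping.lookup f k * monomial_value k x) * (Poly_Mapping.lookup g l * monomial_value l x))"
    by (simp add: mpoly_eval_sum mpoly_eval_single monomial_value_add mult_ac)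
  also have "\<dots> = mpoly_eval f x * mpoly_eval g x"
    by (simp add: sum_product mpoly_eval_def monomial_value_def)
  finally show ?thesis .
qed

lemma mpoly_eval_prod: "mpoly_eval (\<Prod>i\<in>A. f i) x = (\<Prod>i\<in>A. mpoly_eval (f i) x)"
  by (induction A rule: infinite_finite_induct)
    (auto simp: mpoly_eval_mult mpoly_eval_single monomial_value_def simp flip: single_one)

lemma mpoly_eval_mconst: "mpoly_eval (mconst c) x = c"
  unfolding mconst_def by (simp add: mpoly_eval_single monomial_value_def)

lemma mpoly_eval_mvar: "mpoly_eval (mvar v) x = x v"
  unfolding mvar_def by (simp add: mpoly_eval_single monomial_value_def)

definition mpoly_function :: "(('v \<Rightarrow> real) \<Rightarrow> real) \<Rightarrow> bool" where
  "mpoly_function g \<longleftrightarrow> (\<exists>f. g = mpoly_eval f)"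

lemma mpoly_function_const: "mpoly_function (\<lambda>x. c)"
  unfolding mpoly_function_def by (auto intro!: exI[of _ "mconst c"] simp: mpoly_eval_mconst)

lemma mpoly_function_coordinate: "mpoly_function (\<lambda>x. x v)"
  unfolding mpoly_function_def by (auto intro!: exI[of _ "mvar v"] simp: mpoly_eval_mvar)

lemma mpoly_function_mult:
  assumes "mpoly_function g" "mpoly_function h"
  shows "mpoly_function (\<lambda>x. g x * h x)"
proof -
  obtain f1 f2 where "g = mpoly_eval f1" "h = mpoly_eval f2"
    using assms unfolding mpoly_function_def by blast
  then show ?thesis
    unfolding mpoly_function_def by (auto intro!: exI[of _ "f1 * f2"] simp: mpoly_eval_mult)
qed

lemma mpoly_function_sum:
  assumes "\<And>i. i \<in> A \<Longrightarrow> mpoly_function (g i)"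
  shows "mpoly_function (\<lambda>x. \<Sum>i\<in>A. g i x)"
proof -
  obtain f where "\<forall>i\<in>A. g i = mpoly_eval (f i)"
    using bchoice[of A "\<lambda>i f. g i = mpoly_eval f"] assms unfolding mpoly_function_def by blast
  then show ?thesis
    unfolding mpoly_function_def by (auto intro!: exI[of _ "\<Sum>i\<in>A. f i"] simp: mpoly_eval_sum)
qed

lemma mpoly_function_prod:
  assumes "\<And>i. i \<in> A \<Longrightarrow> mpoly_function (g i)"
  shows "mpoly_function (\<lambda>x. \<Prod>i\<in>A. g i x)"
proof -
  obtain f where "\<forall>i\<in>A. g i = mpoly_eval (f i)"
    using bchoice[of A "\<lambda>i f. g i = mpoly_eval f"] assms unfolding mpoly_function_def by blast
  then show ?thesis
    unfolding mpoly_function_def by (auto intro!: exI[of _ "\<Prod>i\<in>A. f i"] simp: mpoly_eval_prod)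
qed

lemma mpoly_function_det:
  assumes carrier: "\<And>x. M x \<in> carrier_mat nr nc"
    and entries: "\<And>i k. i < nr \<Longrightarrow> k < nc \<Longrightarrow> mpoly_function (\<lambda>x. M x $$ (i, k))"
  shows "mpoly_function (\<lambda>x. det (M x))"
proof (cases "nr = nc")
  case True
  have "det (M x) = (\<Sum>p\<in>{p. p permutes {0..<nr}}. signof p * (\<Prod>i=0..<nr. M x $$ (i, p i)))"
    for x using det_def'[of "M x" nr] carrier True by simp
  moreover have "mpoly_function (\<lambda>x.
      \<Sum>p\<in>{p. p permutes {0..<nr}}. signof p * (\<Prod>i=0..<nr. M x $$ (i, p i)))"
    using True
    by (intro mpoly_function_sum mpoly_function_mult mpoly_function_const mpoly_function_prod
        entries) (auto dest: permutes_in_image)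
  ultimately show ?thesis by simp
next
  case False
  then have "det (M x) = 0" for x using carrier[of x] by (auto simp: det_def)
  then show ?thesis using mpoly_function_const by simp
qed

lemma mpoly_function_submatrix_entry:
  assumes carrier: "\<And>x. A x \<in> carrier_mat nr nc"
    and entries: "\<And>i k. i < nr \<Longrightarrow> k < nc \<Longrightarrow> mpoly_function (\<lambda>x. A x $$ (i, k))"
    and "i < card {i. i < nr \<and> i \<in> I}" "k < card {k. k < nc \<and> k \<in> J}"
  shows "mpoly_function (\<lambda>x. submatrix (A x) I J $$ (i, k))"
proof -
  have "submatrix (A x) I J $$ (i, k) = A x $$ (pick I i, pick J k)" for x
    using assms(3,4) carrier_matD[OF carrier[of x]] by (simp add: submatrix_index)
  then show ?thesis using entries pick_le assms(3,4) by simp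
qed

lemma mpoly_function_vanishes_on_zariski_closure:
  assumes "mpoly_function g" "\<And>x. x \<in> S \<Longrightarrow> g x = 0" "p \<in> zariski_closure S"
  shows "g p = 0"
  using assms unfolding mpoly_function_def zariski_closure_def by auto

section \<open>Rank bounds\<close>

lemma rank_le_of_sum_products:
  fixes f g :: "nat \<Rightarrow> nat \<Rightarrow> real"
  assumes "M \<in> carrier_mat nr nc"
    and "\<And>r c. r < nr \<Longrightarrow> c < nc \<Longrightarrow> M $$ (r, c) = (\<Sum>i<a. f i r * g i c)"
  shows "vec_space.rank nr M \<le> a"
  using assms
proof (induction a arbitrary: M)
  case 0
  interpret vec_space "TYPE(real)" nr .
  have "M = 0\<^sub>m nr nc" using 0 by (intro eq_matI) auto
  then show ?case using rank_0I by simp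
next
  case (Suc a)
  interpret vec_space "TYPE(real)" nr .
  define M1 where "M1 = mat nr nc (\<lambda>(r, c). \<Sum>i<a. f i r * g i c)"
  define M2 where "M2 = mat nr nc (\<lambda>(r, c). f a r * g a c)"
  have M1: "M1 \<in> carrier_mat nr nc" and M2: "M2 \<in> carrier_mat nr nc"
    unfolding M1_def M2_def by auto
  have "M = M1 + M2" using Suc.prems unfolding M1_def M2_def by (intro eq_matI) auto
  moreover have "rank M1 \<le> a" using Suc.IH[OF M1] unfolding M1_def by auto
  moreover have "rank M2 \<le> 1"
    using rank_le_1_product_entries[OF M2, of "f a" "g a"] unfolding M2_def by auto
  ultimately show ?case using rank_subadditive[OF M1 M2] by simp
qed

lemma det_submatrix_eq_0_if_rank_less:
  assumes "A \<in> carrier_mat nr nc" "vec_space.rank nr A < card J" "J \<subseteq> {..<nc}"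
  shows "det (submatrix A I J) = 0"
proof -
  have "{j. j < nc \<and> j \<in> J} = J" using assms(3) by auto
  then show ?thesis using vec_space.rank_gt_minor[OF assms(1), of I J] assms(2) by auto
qed

section \<open>Coefficients of the attention polynomial\<close>

abbreviation var_monomial :: "nat \<times> nat \<Rightarrow> (nat \<times> nat) \<Rightarrow>\<^sub>0 nat" where
  "var_monomial v \<equiv> Poly_Mapping.single v 1"

lemma phi_entry_expand:
  "phi_entry a d t Q K V j = (\<Sum>m<t. \<Sum>k<d. \<Sum>p<d. \<Sum>q<d.
      Poly_Mapping.single (var_monomial (k, m) + var_monomial (p, m) + var_monomial (q, j))
        (V k * attA a Q K p q))"
  unfolding phi_entry_def sum_distrib_right unfolding sum_distrib_left
  by (intro sum.cong refl) (simp add: mconst_def mvar_def mult_single add_ac)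

lemma var_monomial_cubic_eq_iff:
  assumes "n \<noteq> j"
  shows "var_monomial (k, m) + var_monomial (p, m) + var_monomial (q, j)
           = var_monomial (k1, n) + var_monomial (k2, n) + var_monomial (b, j)
     \<longleftrightarrow> m = n \<and> q = b \<and> (k = k1 \<and> p = k2 \<or> k = k2 \<and> p = k1)"
proof
  assume eq: "var_monomial (k, m) + var_monomial (p, m) + var_monomial (q, j)
              = var_monomial (k1, n) + var_monomial (k2, n) + var_monomial (b, j)"
  have "Poly_Mapping.lookup (var_monomial (k, m) + var_monomial (p, m) + var_monomial (q, j)) (q, j)
      = Poly_Mapping.lookup (var_monomial (k1, n) + var_monomial (k2, n) + var_monomial (b, j)) (q, j)"
    using eq by simp
  then have qb: "q = b" using assms by (auto simp: lookup_add lookup_single when_def split: if_splits)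
  with eq have eq2: "var_monomial (k, m) + var_monomial (p, m)
                     = var_monomial (k1, n) + var_monomial (k2, n)" by simp
  have "Poly_Mapping.lookup (var_monomial (k, m) + var_monomial (p, m)) (k, m)
      = Poly_Mapping.lookup (var_monomial (k1, n) + var_monomial (k2, n)) (k, m)"
    using eq2 by simp
  then have mn: "m = n" and "k = k1 \<or> k = k2"
    by (auto simp: lookup_add lookup_single when_def split: if_splits)
  moreover have "p = k2" if "k = k1"
  proof -
    have "var_monomial (p, n) = var_monomial (k2, n)" using eq2 mn that by simp
    then show ?thesis by (metis lookup_single_eq lookup_single_not_eq one_neq_zero prod.inject)
  qed
  moreover have "p = k1" if "k = k2"
  proof -
    have "var_monomial (p, n) = var_monomial (k1, n)" using eq2 mn that by (metis add.commute add_left_cancel)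
    then show ?thesis by (metis lookup_single_eq lookup_single_not_eq one_neq_zero prod.inject)
  qed
  ultimately show "m = n \<and> q = b \<and> (k = k1 \<and> p = k2 \<or> k = k2 \<and> p = k1)" using qb by blast
qed (auto simp: add_ac)

lemma sum_pair_indicator:
  fixes g :: "nat \<Rightarrow> nat \<Rightarrow> 'z::comm_monoid_add"
  assumes "k1 < d" "k2 < d"
  shows "(\<Sum>k<d. \<Sum>p<d. if k = k1 \<and> p = k2 \<or> k = k2 \<and> p = k1 then g k p else 0)
       = (if k1 = k2 then g k1 k1 else g k1 k2 + g k2 k1)"
proof -
  have "(\<Sum>p<d. if k = k1 \<and> p = k2 \<or> k = k2 \<and> p = k1 then g k p else 0)
      = (if k = k1 then g k1 k2 else 0) + (if k = k2 \<and> k1 \<noteq> k2 then g k2 k1 else 0)" for k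
    using assms by (cases "k = k1"; cases "k = k2") auto
  then show ?thesis using assms by (simp add: sum.distrib)
qed

lemma c_coef_doubleton:
  assumes "n \<noteq> j" "n < t" "k1 < d" "k2 < d" "b < d"
  shows "c_coef a d t Q K V n j {#k1, k2#} b
       = (if k1 = k2 then V k1 * attA a Q K k1 b
          else V k1 * attA a Q K k2 b + V k2 * attA a Q K k1 b)"
proof -
  let ?R = "\<lambda>k p. k = k1 \<and> p = k2 \<or> k = k2 \<and> p = k1"
  have "coeff_monomial {#k1, k2#} b n j
      = var_monomial (k1, n) + var_monomial (k2, n) + var_monomial (b, j)"
    unfolding coeff_monomial_def by (simp add: add_ac)
  then have "c_coef a d t Q K V n j {#k1, k2#} b = (\<Sum>m<t. \<Sum>k<d. \<Sum>p<d. \<Sum>q<d.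
      if m = n then if q = b then if ?R k p then V k * attA a Q K p q else 0 else 0 else 0)"
    unfolding c_coef_def phi_entry_expand lookup_sum
    by (intro sum.cong refl)
      (simp only: lookup_single when_def var_monomial_cubic_eq_iff[OF assms(1)], auto)
  also have "\<dots> = (\<Sum>m<t. if m = n then (\<Sum>k<d. \<Sum>p<d. \<Sum>q<d.
      if q = b then if ?R k p then V k * attA a Q K p q else 0 else 0) else 0)"
    by (intro sum.cong refl) (cases "m = n"; simp)
  also have "\<dots> = (\<Sum>k<d. \<Sum>p<d. if ?R k p then V k * attA a Q K p b else 0)"
    using assms(2,5) by (simp only: sum.delta finite_lessThan) simp
  also have "\<dots> = (if k1 = k2 then V k1 * attA a Q K k1 b
                   else V k1 * attA a Q K k2 b + V k2 * attA a Q K k1 b)"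
    using sum_pair_indicator[OF assms(3,4)] .
  finally show ?thesis .
qed

lemma y_coef_doubleton:
  assumes "n \<noteq> j" "n < t" "k1 < d" "k2 < d" "b < d"
  shows "y_coef a d t Q K V n j {#k1, k2#} b
       = (\<Sum>i<a. (V k1 * K i k2 + V k2 * K i k1) / 2 * Q i b)"
proof -
  have "y_coef a d t Q K V n j {#k1, k2#} b
      = (V k1 * attA a Q K k2 b + V k2 * attA a Q K k1 b) / 2"
    by (simp add: y_coef_def c_coef_doubleton[OF assms] permutations_of_multiset_doubleton)
  also have "\<dots> = (\<Sum>i<a. (V k1 * K i k2 + V k2 * K i k1) / 2 * Q i b)"
    unfolding attA_def sum_distrib_left sum.distrib[symmetric] sum_divide_distrib
    by (rule sum.cong) (simp_all add: field_simps)
  finally show ?thesis .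
qed

section \<open>The coefficient matrix\<close>

definition mult2_pairs :: "nat \<Rightarrow> (nat \<times> nat) list" where
  "mult2_pairs d = concat (map (\<lambda>k1. map (\<lambda>k2. (k1, k2)) [k1..<d]) [0..<d])"

lemma mult2_list_eq_map_pairs: "mult2_list d = map (\<lambda>(k1, k2). {#k1, k2#}) (mult2_pairs d)"
  by (simp add: mult2_list_def mult2_pairs_def map_concat comp_def)

lemma mult2_pairs_less: "(k1, k2) \<in> set (mult2_pairs d) \<Longrightarrow> k1 < d \<and> k2 < d"
  by (auto simp: mult2_pairs_def)

lemma Fmat_carrier: "Fmat d n j p \<in> carrier_mat (length (mult2_list d)) d"
  by (simp add: Fmat_def)

lemma mpoly_function_Fmat_entry:
  "r < length (mult2_list d) \<Longrightarrow> c < d \<Longrightarrow> mpoly_function (\<lambda>p. Fmat d n j p $$ (r, c))"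
  by (simp add: Fmat_def mpoly_function_coordinate)

lemma Fmat_mu_entry:
  assumes "n \<noteq> j" "n < t" "j < t" "r < length (mult2_list d)" "c < d"
    and "mult2_pairs d ! r = (k1, k2)"
  shows "Fmat d n j (mu a d t (Q, K, V)) $$ (r, c)
       = (\<Sum>i<a. (V k1 * K i k2 + V k2 * K i k1) / 2 * Q i c)"
proof -
  have "(k1, k2) \<in> set (mult2_pairs d)"
    using assms(4,6) nth_mem[of r "mult2_pairs d"] by (simp add: mult2_list_eq_map_pairs)
  then have k: "k1 < d" "k2 < d" using mult2_pairs_less by auto
  have row: "mult2_list d ! r = {#k1, k2#}"
    using assms(4,6) by (simp add: mult2_list_eq_map_pairs)
  then have "(n, j, mult2_list d ! r, c) \<in> coords d t"
    using assms k by (auto simp: coords_def Mult2_def)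
  then show ?thesis
    using assms k row by (simp add: Fmat_def mu_def y_coef_doubleton)
qed

lemma rank_Fmat_mu_le:
  assumes "n \<noteq> j" "n < t" "j < t"
  shows "vec_space.rank (length (mult2_list d)) (Fmat d n j (mu a d t W)) \<le> a"
proof -
  obtain Q K V where W: "W = (Q, K, V)" by (cases W)
  define row_factor where "row_factor i r =
    (case mult2_pairs d ! r of (k1, k2) \<Rightarrow> (V k1 * K i k2 + V k2 * K i k1) / 2)" for i r
  show ?thesis
    unfolding W
  proof (rule rank_le_of_sum_products[OF Fmat_carrier, where f = row_factor and g = Q])
    fix r c assume rc: "r < length (mult2_list d)" "c < d"
    obtain k1 k2 where k: "mult2_pairs d ! r = (k1, k2)" by fastforce
    show "Fmat d n j (mu a d t (Q, K, V)) $$ (r, c) = (\<Sum>i<a. row_factor i r * Q i c)"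
      unfolding Fmat_mu_entry[OF assms rc k] row_factor_def k by simp
  qed
qed

theorem mainTheorem10:
  fixes a d t n j :: nat
  assumes "t \<ge> 2" and "a < d" and "n < t" and "j < t" and "n \<noteq> j"
  shows "(\<forall>W. vec_space.rank (length (mult2_list d)) (Fmat d n j (mu a d t W)) \<le> a)
       \<and> (\<forall>p \<in> attention_variety a d t. \<forall>I J.
            I \<subseteq> {..<length (mult2_list d)} \<longrightarrow> J \<subseteq> {..<d} \<longrightarrow>
            card I = a + 1 \<longrightarrow> card J = a + 1 \<longrightarrow>
            det (submatrix (Fmat d n j p) I J) = 0)"
proof (intro conjI allI ballI impI)
  show "vec_space.rank (length (mult2_list d)) (Fmat d n j (mu a d t W)) \<le> a" for W
    using rank_Fmat_mu_le assms(3-5) by blast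
next
  fix p I J
  assume p: "p \<in> attention_variety a d t" and J: "J \<subseteq> {..<d}" "card J = a + 1"
  let ?rows = "card {r. r < length (mult2_list d) \<and> r \<in> I}" and ?cols = "card {c. c < d \<and> c \<in> J}"
  have "mpoly_function (\<lambda>x. det (submatrix (Fmat d n j x) I J))"
  proof (rule mpoly_function_det[where nr = ?rows and nc = ?cols])
    show "submatrix (Fmat d n j x) I J \<in> carrier_mat ?rows ?cols" for x
      by (simp add: carrier_matI dim_submatrix Fmat_def)
    show "mpoly_function (\<lambda>x. submatrix (Fmat d n j x) I J $$ (r, c))" if "r < ?rows" "c < ?cols" for r c
      using mpoly_function_submatrix_entry[OF Fmat_carrier mpoly_function_Fmat_entry that] .
  qed
  moreover have "det (submatrix (Fmat d n j x) I J) = 0" if x: "x \<in> range (mu a d t)" for x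
  proof -
    obtain W where "x = mu a d t W" using x by blast
    then show ?thesis
      using rank_Fmat_mu_le[OF assms(5,3,4), where W = W and a = a and d = d] J(2)
      by (intro det_submatrix_eq_0_if_rank_less[OF Fmat_carrier _ J(1)]) simp
  qed
  ultimately show "det (submatrix (Fmat d n j p) I J) = 0"
    using p unfolding attention_variety_def by (rule mpoly_function_vanishes_on_zariski_closure)
qed

end
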